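(* Let $\theta_1,\dots,\theta_M$ be i.i.d. $\mathrm{Dir}_K(\alpha)$ with $\alpha\in\mathbb R_+^K$, and $p_m=\sum_k\beta_k\theta_{mk}$. Then for any $i\in\{1,\dots,K\}$ and any $0<\epsilon<\max_{k\ne i}a_{i,k}$, $$\mathbb P\big(p_m\notin\mathscr B(\beta_i,\epsilon)\ \forall m\in\{1,\dots,M\}\big)\le\left(\frac{\int_0^{1-\epsilon/\max_{k\ne i}a_{i,k}}\theta^{\alpha_i-1}(1-\theta)^{\sum_{j\ne i}\alpha_j-1}d\theta}{\int_0^1\theta^{\alpha_i-1}(1-\theta)^{\sum_{j\ne i}\alpha_j-1}d\theta}\right)^M.$$
   Context: $\beta_1,\dots,\beta_K\in\Delta^{V-1}$ are topics, $a_{i,k}=\|\beta_i-\beta_k\|_2$, and $\mathscr B(x,\epsilon)$ is the open Euclidean ball of radius $\epsilon$ centered at $x$. *)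

theory Defs
  imports "HOL-Probability.Probability"
begin

text \<open>Components are indexed by 1..K; a point of the simplex is an (extensional)
  function on {1..K}. Following the standard definition, the first K-1
  coordinates have the Lebesgue density
  Gamma(sum alpha)/prod Gamma(alpha_k) * prod_k x_k^(alpha_k - 1)
  on the open simplex, and the last coordinate is 1 minus their sum.\<close>

definition dirichlet_density :: "nat \<Rightarrow> (nat \<Rightarrow> real) \<Rightarrow> (nat \<Rightarrow> real) \<Rightarrow> real" where
  "dirichlet_density K \<alpha> x =
     (if (\<forall>k\<in>{1..<K}. 0 < x k) \<and> (\<Sum>k\<in>{1..<K}. x k) < 1
      then Gamma (\<Sum>k\<in>{1..K}. \<alpha> k) / (\<Prod>k\<in>{1..K}. Gamma (\<alpha> k))
           * (\<Prod>k\<in>{1..<K}. x k powr (\<alpha> k - 1))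
           * (1 - (\<Sum>k\<in>{1..<K}. x k)) powr (\<alpha> K - 1)
      else 0)"

definition dirichlet_complete :: "nat \<Rightarrow> (nat \<Rightarrow> real) \<Rightarrow> (nat \<Rightarrow> real)" where
  "dirichlet_complete K x =
     restrict (\<lambda>k. if k = K then 1 - (\<Sum>j\<in>{1..<K}. x j) else x k) {1..K}"

definition dirichlet :: "nat \<Rightarrow> (nat \<Rightarrow> real) \<Rightarrow> (nat \<Rightarrow> real) measure" where
  "dirichlet K \<alpha> =
     distr (density (PiM {1..<K} (\<lambda>_. lborel)) (\<lambda>x. ennreal (dirichlet_density K \<alpha> x)))
           (PiM {1..K} (\<lambda>_. lborel)) (dirichlet_complete K)"

end

theory Submission
  imports Defs
begin

text \<open>If \<open>p\<^sub>m\<close> avoids the ball, then from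
  \<open>p\<^sub>m - \<beta>\<^sub>i = (\<Sum>k\<noteq>i. \<theta>\<^sub>m\<^sub>k (\<beta>\<^sub>k - \<beta>\<^sub>i))\<close> we get \<open>\<epsilon> \<le> (1 - \<theta>\<^sub>m\<^sub>i) max\<^sub>k a\<^sub>i\<^sub>,\<^sub>k\<close>,
  i.e. \<open>\<theta>\<^sub>m\<^sub>i \<le> 1 - \<epsilon> / max\<^sub>k a\<^sub>i\<^sub>,\<^sub>k\<close>. The coordinate \<open>\<theta>\<^sub>m\<^sub>i\<close> of a
  \<open>Dir(\<alpha>)\<close> vector is \<open>Beta(\<alpha>\<^sub>i, \<Sum>\<^sub>j\<^sub>\<noteq>\<^sub>i \<alpha>\<^sub>j)\<close>-distributed, so each of these
  independent events has probability equal to the incomplete Beta ratio on the right.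
  The Beta marginal is obtained by integrating the Dirichlet density one coordinate at a
  time with the scaled Beta integral \<open>\<integral>\<^sub>0\<^sup>s y\<^sup>a\<^sup>-\<^sup>1 (s - y)\<^sup>b\<^sup>-\<^sup>1 dy = s\<^sup>a\<^sup>+\<^sup>b\<^sup>-\<^sup>1 B(a,b)\<close>;
  for the last coordinate \<open>\<theta>\<^sub>K = 1 - \<Sum>\<^sub>k\<^sub><\<^sub>K \<theta>\<^sub>k\<close> the reflection
  \<open>x\<^sub>1 \<mapsto> 1 - \<Sum>\<^sub>k\<^sub><\<^sub>K x\<^sub>k\<close> first exchanges its role with that of \<open>\<theta>\<^sub>1\<close>.\<close>

lemma beta_kernel_scale:
  fixes a b s x :: real
  assumes "0 < s" "0 < x" "x < 1"
  shows "(s * x) powr (a-1) * (s - s * x) powr (b-1) = s powr (a+b-2) * (x powr (a-1) * (1-x) powr (b-1))"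
proof -
  have "(s * x) powr (a-1) * (s * (1-x)) powr (b-1)
      = (s powr (a-1) * s powr (b-1)) * (x powr (a-1) * (1-x) powr (b-1))"
    using assms by (simp add: powr_mult mult_ac)
  also have "s powr (a-1) * s powr (b-1) = s powr (a+b-2)"
    by (simp add: powr_add[symmetric])
  finally show ?thesis by (simp add: right_diff_distrib)
qed

lemma nn_integral_beta_scaled:
  fixes a b s :: real
  assumes a: "a > 0" and b: "b > 0" and s: "s > 0"
  shows "(\<integral>\<^sup>+y. ennreal (if 0 < y \<and> y < s then y powr (a-1) * (s-y) powr (b-1) else 0) \<partial>lborel)
       = ennreal (s powr (a+b-1) * Beta a b)"
proof -
  let ?f = "\<lambda>y. ennreal (if 0 < y \<and> y < s then y powr (a-1) * (s-y) powr (b-1) else 0)"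
  have "(\<integral>\<^sup>+y. ?f y \<partial>lborel) = ennreal \<bar>s\<bar> * (\<integral>\<^sup>+x. ?f (0 + s * x) \<partial>lborel)"
    using s by (intro nn_integral_real_affine) auto
  also have "(\<integral>\<^sup>+x. ?f (0 + s * x) \<partial>lborel) = (\<integral>\<^sup>+x. ennreal (s powr (a+b-2)) *
       ennreal (indicator {0..1} x * (x powr (a-1) * (1-x) powr (b-1))) \<partial>lborel)"
  proof (intro nn_integral_cong)
    fix x :: real
    show "?f (0 + s * x) = ennreal (s powr (a+b-2)) *
       ennreal (indicator {0..1} x * (x powr (a-1) * (1-x) powr (b-1)))"
    proof (cases "0 < x \<and> x < 1")
      case True
      then show ?thesis using s beta_kernel_scale[of s x a b]
        by (auto simp: ennreal_mult[symmetric] indicator_def zero_less_mult_iff)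
    next
      case False
      then have "x \<le> 0 \<or> 1 \<le> x" by auto
      then show ?thesis using s
        by (auto simp: indicator_def zero_less_mult_iff mult_less_cancel_left2)
    qed
  qed
  also have "\<dots> = ennreal (s powr (a+b-2)) * ennreal (Beta a b)"
  proof -
    have "(\<integral>\<^sup>+x. ennreal (indicator {0..1} x * (x powr (a-1) * (1-x) powr (b-1))) \<partial>lborel)
        = ennreal (Beta a b)"
      by (rule nn_integral_has_integral_lebesgue) (auto intro: has_integral_Beta_real a b)
    then show ?thesis by (subst nn_integral_cmult) auto
  qed
  also have "ennreal \<bar>s\<bar> * (ennreal (s powr (a+b-2)) * ennreal (Beta a b))
      = ennreal (s powr (a+b-1) * Beta a b)"
  proof -
    have "\<bar>s\<bar> * s powr (a+b-2) = s powr (a+b-1)"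
      using s powr_add[of s "a+b-2" 1] by (simp add: algebra_simps)
    moreover have "Beta a b \<ge> 0" using a b by (simp add: Beta_def)
    ultimately show ?thesis
      using s by (simp add: ennreal_mult'[symmetric] mult.assoc[symmetric] ennreal_mult[symmetric])
  qed
  finally show ?thesis .
qed

lemma interval_integral_Beta:
  fixes a b :: real
  assumes "a > 0" "b > 0"
  shows "(LBINT t=0..1. t powr (a-1) * (1-t) powr (b-1)) = Beta a b"
proof -
  have "(LBINT t=0..1. t powr (a-1) * (1-t) powr (b-1))
      = (LBINT t:{0..1}. t powr (a-1) * (1-t) powr (b-1))"
    using interval_integral_Icc[of 0 1] by (simp add: zero_ereal_def one_ereal_def)
  also have "\<dots> = integral {0..1} (\<lambda>t. t powr (a-1) * (1-t) powr (b-1))"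
    by (rule set_borel_integral_eq_integral(2)[OF integrable_Beta[OF assms]])
  also have "\<dots> = Beta a b"
    by (rule integral_unique[OF has_integral_Beta_real[OF assms]])
  finally show ?thesis .
qed

lemma nn_integral_beta_le_eq_interval_integral:
  fixes a b c :: real
  assumes a: "a > 0" and b: "b > 0" and c: "0 \<le> c" "c \<le> 1"
  shows "(\<integral>\<^sup>+t. indicator {..c} t *
            ennreal (if 0 < t \<and> t < 1 then t powr (a-1) * (1-t) powr (b-1) else 0) \<partial>lborel)
       = ennreal (LBINT t=0..c. t powr (a-1) * (1-t) powr (b-1))"
proof -
  let ?f = "\<lambda>t::real. t powr (a-1) * (1-t) powr (b-1)"
  have int_unit: "integrable lborel (\<lambda>t. indicator {0..1} t *\<^sub>R ?f t)"
    using integrable_Beta[OF a b] by (simp add: set_integrable_def)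
  have int: "integrable lborel (\<lambda>t. indicator {0<..<c} t *\<^sub>R ?f t)"
    by (rule Bochner_Integration.integrable_bound[OF int_unit])
      (use c in \<open>auto simp: indicator_def intro!: AE_I2\<close>)
  have "(\<integral>\<^sup>+t. indicator {..c} t * ennreal (if 0 < t \<and> t < 1 then ?f t else 0) \<partial>lborel)
      = (\<integral>\<^sup>+t. ennreal (indicator {0<..<c} t *\<^sub>R ?f t) \<partial>lborel)"
  proof (intro nn_integral_cong_AE)
    show "AE t in lborel. indicator {..c} t * ennreal (if 0 < t \<and> t < 1 then ?f t else 0)
        = ennreal (indicator {0<..<c} t *\<^sub>R ?f t)"
      using AE_lborel_singleton[of c] by eventually_elim (use c in \<open>auto simp: indicator_def\<close>)
  qed
  also have "\<dots> = ennreal (integral\<^sup>L lborel (\<lambda>t. indicator {0<..<c} t *\<^sub>R ?f t))"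
    by (rule nn_integral_eq_integral[OF int]) (auto simp: indicator_def intro!: AE_I2)
  also have "integral\<^sup>L lborel (\<lambda>t. indicator {0<..<c} t *\<^sub>R ?f t) = (LBINT t=0..c. ?f t)"
    using c by (simp add: interval_integral_Ioo set_lebesgue_integral_def)
  finally show ?thesis .
qed

text \<open>The unnormalised Dirichlet density on the scaled open simplex
  \<open>{x > 0. \<Sum>\<^sub>k\<^sub>\<in>\<^sub>I x\<^sub>k < s}\<close>, the implicit last coordinate being \<open>s - \<Sum>\<^sub>k\<^sub>\<in>\<^sub>I x\<^sub>k\<close>
  with parameter \<open>b\<close>.\<close>

definition dirichlet_kernel ::
    "nat set \<Rightarrow> (nat \<Rightarrow> real) \<Rightarrow> real \<Rightarrow> real \<Rightarrow> (nat \<Rightarrow> real) \<Rightarrow> real" where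
  "dirichlet_kernel I a b s x =
     (if (\<forall>k\<in>I. 0 < x k) \<and> sum x I < s
      then (\<Prod>k\<in>I. x k powr (a k - 1)) * (s - sum x I) powr (b - 1) else 0)"

lemma dirichlet_kernel_nonneg: "0 \<le> dirichlet_kernel I a b s x"
  by (simp add: dirichlet_kernel_def prod_nonneg)

lemma dirichlet_kernel_nonzeroD:
  "dirichlet_kernel I a b s x \<noteq> 0 \<Longrightarrow> (\<forall>k\<in>I. 0 < x k) \<and> sum x I < s"
  by (auto simp: dirichlet_kernel_def split: if_splits)

lemma dirichlet_kernel_nonpos_scale:
  assumes "s \<le> 0"
  shows "dirichlet_kernel I a b s x = 0"
proof (rule ccontr)
  assume "dirichlet_kernel I a b s x \<noteq> 0"
  then have "\<forall>k\<in>I. 0 < x k" "sum x I < s" by (auto dest: dirichlet_kernel_nonzeroD)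
  moreover from this(1) have "0 \<le> sum x I" by (auto intro: sum_nonneg less_imp_le)
  ultimately show False using assms by linarith
qed

lemma borel_measurable_dirichlet_kernel [measurable]:
  "finite I \<Longrightarrow> dirichlet_kernel I a b s \<in> borel_measurable (PiM I (\<lambda>_. lborel))"
  unfolding dirichlet_kernel_def by measurable

lemma dirichlet_kernel_fun_upd:
  assumes "finite I" "j \<notin> I"
  shows "dirichlet_kernel (insert j I) a b s (x(j := y)) =
           (if 0 < y then y powr (a j - 1) * dirichlet_kernel I a b (s - y) x else 0)"
proof -
  have sum_I: "sum (x(j := y)) I = sum x I"
    and prod_I: "(\<Prod>k\<in>I. (x(j := y)) k powr (a k - 1)) = (\<Prod>k\<in>I. x k powr (a k - 1))"
    using assms by (auto intro!: sum.cong prod.cong)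
  have "sum (x(j := y)) (insert j I) = y + sum x I"
    using sum.insert[OF assms, of "x(j := y)"] sum_I by simp
  moreover have "(\<Prod>k\<in>insert j I. (x(j := y)) k powr (a k - 1)) = y powr (a j - 1) * (\<Prod>k\<in>I. x k powr (a k - 1))"
    using prod.insert[OF assms, of "\<lambda>k. (x(j := y)) k powr (a k - 1)"] prod_I by simp
  moreover have "(\<forall>k\<in>insert j I. 0 < (x(j := y)) k) \<longleftrightarrow> 0 < y \<and> (\<forall>k\<in>I. 0 < x k)"
    using assms by auto
  ultimately show ?thesis
    by (auto simp: dirichlet_kernel_def algebra_simps diff_diff_eq)
qed

text \<open>Fubini with the new coordinate outermost: a closed form of the integral of the kernel
  on \<open>I\<close> as a function of the scale yields the marginal density of the new coordinate.\<close>

lemma nn_integral_dirichlet_kernel_insert: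
  assumes I: "finite I" "j \<notin> I" and g [measurable]: "g \<in> borel_measurable borel"
    and C: "0 \<le> C"
    and closed_form: "\<And>s. 0 < s \<Longrightarrow>
      (\<integral>\<^sup>+x. ennreal (dirichlet_kernel I a b s x) \<partial>PiM I (\<lambda>_. lborel)) = ennreal (s powr e * C)"
  shows "(\<integral>\<^sup>+x. g (x j) * ennreal (dirichlet_kernel (insert j I) a b s x) \<partial>PiM (insert j I) (\<lambda>_. lborel))
    = ennreal C * (\<integral>\<^sup>+y. g y *
        ennreal (if 0 < y \<and> y < s then y powr (a j - 1) * (s - y) powr e else 0) \<partial>lborel)"
proof -
  interpret product_sigma_finite "\<lambda>_. lborel" by standard
  have inner: "(\<integral>\<^sup>+x. ennreal (dirichlet_kernel (insert j I) a b s (x(j := y))) \<partial>PiM I (\<lambda>_. lborel))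
      = ennreal C * ennreal (if 0 < y \<and> y < s then y powr (a j - 1) * (s - y) powr e else 0)" for y
  proof (cases "0 < y")
    case True
    have "(\<integral>\<^sup>+x. ennreal (dirichlet_kernel (insert j I) a b s (x(j := y))) \<partial>PiM I (\<lambda>_. lborel))
        = ennreal (y powr (a j - 1)) * (\<integral>\<^sup>+x. ennreal (dirichlet_kernel I a b (s - y) x) \<partial>PiM I (\<lambda>_. lborel))"
      using True I by (simp add: dirichlet_kernel_fun_upd ennreal_mult dirichlet_kernel_nonneg
          nn_integral_cmult)
    also have "\<dots> = ennreal C * ennreal (if y < s then y powr (a j - 1) * (s - y) powr e else 0)"
      using C by (cases "y < s")
        (simp_all add: closed_form dirichlet_kernel_nonpos_scale ennreal_mult[symmetric] mult_ac)
    finally show ?thesis using True by simp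
  qed (simp add: dirichlet_kernel_fun_upd I)
  have "(\<integral>\<^sup>+x. g (x j) * ennreal (dirichlet_kernel (insert j I) a b s x) \<partial>PiM (insert j I) (\<lambda>_. lborel))
      = (\<integral>\<^sup>+y. \<integral>\<^sup>+x. g y * ennreal (dirichlet_kernel (insert j I) a b s (x(j := y)))
           \<partial>PiM I (\<lambda>_. lborel) \<partial>lborel)"
    using I by (subst product_nn_integral_insert_rev) auto
  also have "\<dots> = (\<integral>\<^sup>+y. ennreal C * (g y *
        ennreal (if 0 < y \<and> y < s then y powr (a j - 1) * (s - y) powr e else 0)) \<partial>lborel)"
    using I by (intro nn_integral_cong) (simp add: nn_integral_cmult inner mult_ac)
  also have "\<dots> = ennreal C * (\<integral>\<^sup>+y. g y *
        ennreal (if 0 < y \<and> y < s then y powr (a j - 1) * (s - y) powr e else 0) \<partial>lborel)"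
    by (intro nn_integral_cmult) measurable
  finally show ?thesis .
qed

lemma nn_integral_dirichlet_kernel:
  assumes "finite I" "\<forall>k\<in>I. 0 < a k" "0 < b" "0 < s"
  shows "(\<integral>\<^sup>+x. ennreal (dirichlet_kernel I a b s x) \<partial>PiM I (\<lambda>_. lborel))
       = ennreal (s powr (sum a I + b - 1) * ((\<Prod>k\<in>I. Gamma (a k)) * Gamma b / Gamma (sum a I + b)))"
  using assms
proof (induction I arbitrary: s rule: finite_induct)
  case empty
  then show ?case
    by (simp add: PiM_empty nn_integral_count_space_finite dirichlet_kernel_def Gamma_real_pos
        less_imp_neq[symmetric])
next
  case (insert j I s)
  let ?A = "sum a I" and ?P = "\<Prod>k\<in>I. Gamma (a k)"
  define C where "C = ?P * Gamma b / Gamma (?A + b)"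
  have aj: "0 < a j" and A: "0 \<le> ?A" using insert.prems by (auto intro: sum_nonneg less_imp_le)
  have P: "0 < ?P" using insert.prems by (auto intro!: prod_pos Gamma_real_pos)
  have G: "0 < Gamma b" "0 < Gamma (?A + b)" "0 < Gamma (a j)" "0 < Gamma (a j + (?A + b))"
    using A aj insert.prems by (auto intro!: Gamma_real_pos)
  have "(\<integral>\<^sup>+x. ennreal (dirichlet_kernel (insert j I) a b s x) \<partial>PiM (insert j I) (\<lambda>_. lborel))
      = ennreal C * (\<integral>\<^sup>+y. ennreal (if 0 < y \<and> y < s
          then y powr (a j - 1) * (s - y) powr ((?A + b) - 1) else 0) \<partial>lborel)"
    using nn_integral_dirichlet_kernel_insert[OF insert.hyps, of "\<lambda>_. 1" C a b "?A + b - 1" s]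
      insert P G by (simp add: C_def)
  also have "\<dots> = ennreal C * ennreal (s powr (a j + (?A + b) - 1) * Beta (a j) (?A + b))"
    using aj A insert.prems by (subst nn_integral_beta_scaled) auto
  also have "\<dots> = ennreal (s powr (sum a (insert j I) + b - 1) *
      ((\<Prod>k\<in>insert j I. Gamma (a k)) * Gamma b / Gamma (sum a (insert j I) + b)))"
    using insert.hyps P G
    by (simp add: C_def Beta_def ennreal_mult[symmetric] field_simps add_ac)
  finally show ?case .
qed

text \<open>The reflection \<open>x\<^sub>j \<mapsto> s - \<Sum>\<^sub>k\<^sub>\<in>\<^sub>I\<^sub>\<union>\<^sub>{\<^sub>j\<^sub>} x\<^sub>k\<close> of the coordinate \<open>x\<^sub>j\<close> exchanges it with
  the implicit last coordinate.\<close>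

lemma nn_integral_dirichlet_kernel_swap:
  assumes I: "finite I" "j \<notin> I" and g [measurable]: "g \<in> borel_measurable borel"
  shows "(\<integral>\<^sup>+x. g (s - sum x (insert j I)) * ennreal (dirichlet_kernel (insert j I) a b s x)
            \<partial>PiM (insert j I) (\<lambda>_. lborel))
       = (\<integral>\<^sup>+x. g (x j) * ennreal (dirichlet_kernel (insert j I) (a(j := b)) (a j) s x)
            \<partial>PiM (insert j I) (\<lambda>_. lborel))"
proof -
  interpret product_sigma_finite "\<lambda>_. lborel" by standard
  have inner: "(\<integral>\<^sup>+y. g (s - sum (x(j := y)) (insert j I)) *
        ennreal (dirichlet_kernel (insert j I) a b s (x(j := y))) \<partial>lborel)
      = (\<integral>\<^sup>+y. g y * ennreal (dirichlet_kernel (insert j I) (a(j := b)) (a j) s (x(j := y))) \<partial>lborel)"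
    for x
  proof -
    let ?S = "sum x I"
    let ?f = "\<lambda>y. g (s - (y + ?S)) *
      ennreal (if 0 < y then y powr (a j - 1) * dirichlet_kernel I a b (s - y) x else 0)"
    let ?h = "\<lambda>y. g y *
      ennreal (if 0 < y then y powr (b - 1) * dirichlet_kernel I (a(j := b)) (a j) (s - y) x else 0)"
    have sum_upd: "sum (x(j := y)) (insert j I) = y + ?S" for y
    proof -
      have "sum (x(j := y)) I = ?S" using I by (intro sum.cong) auto
      then show ?thesis using sum.insert[OF I, of "x(j := y)"] by simp
    qed
    have prod_upd: "(\<Prod>k\<in>I. x k powr ((a(j := b)) k - 1)) = (\<Prod>k\<in>I. x k powr (a k - 1))"
      using I by (intro prod.cong) auto
    have "(\<integral>\<^sup>+y. ?f y \<partial>lborel) = ennreal \<bar>-1\<bar> * (\<integral>\<^sup>+y. ?f ((s - ?S) + (-1) * y) \<partial>lborel)"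
      unfolding dirichlet_kernel_def by (intro nn_integral_real_affine) measurable
    also have "\<dots> = (\<integral>\<^sup>+y. ?f ((s - ?S) + (-1) * y) \<partial>lborel)"
      by simp
    also have "\<dots> = (\<integral>\<^sup>+y. ?h y \<partial>lborel)"
    proof (intro nn_integral_cong)
      fix y :: real
      have "s - ((s - ?S) + (-1) * y + ?S) = y" "s - ((s - ?S) + (-1) * y) - ?S = y"
        by simp_all
      then show "?f ((s - ?S) + (-1) * y) = ?h y"
        unfolding dirichlet_kernel_def prod_upd by (auto simp: algebra_simps)
    qed
    finally show ?thesis unfolding sum_upd dirichlet_kernel_fun_upd[OF I] fun_upd_same .
  qed
  have "(\<integral>\<^sup>+x. g (s - sum x (insert j I)) * ennreal (dirichlet_kernel (insert j I) a b s x)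
            \<partial>PiM (insert j I) (\<lambda>_. lborel))
      = (\<integral>\<^sup>+x. \<integral>\<^sup>+y. g (s - sum (x(j := y)) (insert j I)) *
            ennreal (dirichlet_kernel (insert j I) a b s (x(j := y))) \<partial>lborel \<partial>PiM I (\<lambda>_. lborel))"
    using I by (intro product_nn_integral_insert) measurable
  also have "\<dots> = (\<integral>\<^sup>+x. \<integral>\<^sup>+y. g y *
            ennreal (dirichlet_kernel (insert j I) (a(j := b)) (a j) s (x(j := y))) \<partial>lborel \<partial>PiM I (\<lambda>_. lborel))"
    by (simp only: inner)
  also have "\<dots> = (\<integral>\<^sup>+x. g (x j) * ennreal (dirichlet_kernel (insert j I) (a(j := b)) (a j) s x)
            \<partial>PiM (insert j I) (\<lambda>_. lborel))"
  proof -
    have "(\<lambda>x. g (x j) * ennreal (dirichlet_kernel (insert j I) (a(j := b)) (a j) s x))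
        \<in> borel_measurable (PiM (insert j I) (\<lambda>_. lborel))"
      by measurable (simp add: I)
    from product_nn_integral_insert[OF I this] show ?thesis by (simp only: fun_upd_same)
  qed
  finally show ?thesis .
qed

lemma nn_integral_dirichlet_kernel_coordinate:
  fixes \<alpha> :: "nat \<Rightarrow> real"
  assumes K: "2 \<le> K" and \<alpha>: "\<forall>k\<in>{1..K}. 0 < \<alpha> k" and i: "i \<in> {1..K}"
    and g [measurable]: "g \<in> borel_measurable borel"
  defines "R \<equiv> sum \<alpha> ({1..K} - {i})"
  shows "(\<integral>\<^sup>+x. g (dirichlet_complete K x i) * ennreal (dirichlet_kernel {1..<K} \<alpha> (\<alpha> K) 1 x)
            \<partial>PiM {1..<K} (\<lambda>_. lborel))
       = ennreal ((\<Prod>k\<in>{1..K} - {i}. Gamma (\<alpha> k)) / Gamma R) *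
         (\<integral>\<^sup>+t. g t * ennreal (if 0 < t \<and> t < 1 then t powr (\<alpha> i - 1) * (1 - t) powr (R - 1) else 0) \<partial>lborel)"
proof -
  have C_nonneg: "0 \<le> (\<Prod>k\<in>J. Gamma (a k)) * Gamma b / Gamma (sum a J + b)"
    if "\<forall>k\<in>J. 0 < a k" "0 < b" for J a and b :: real
  proof -
    have "0 < sum a J + b" using that by (intro add_nonneg_pos sum_nonneg) (auto intro: less_imp_le)
    then have "0 < Gamma (sum a J + b)" "0 < Gamma b" "0 < (\<Prod>k\<in>J. Gamma (a k))"
      using that by (auto intro!: Gamma_real_pos prod_pos)
    then show ?thesis by simp
  qed
  show ?thesis
  proof (cases "i = K")
    case True
    define J where "J = {2..<K}"
    define \<alpha>' where "\<alpha>' = \<alpha>(1 := \<alpha> K)"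
    have J: "finite J" "1 \<notin> J" "{1..<K} = insert 1 J" "{1..K} - {i} = insert 1 J" "K \<notin> J"
      using K True by (auto simp: J_def)
    have on_J: "sum \<alpha>' J = sum \<alpha> J" "(\<Prod>k\<in>J. Gamma (\<alpha>' k)) = (\<Prod>k\<in>J. Gamma (\<alpha> k))"
      using J(2) unfolding \<alpha>'_def by (auto intro!: sum.cong prod.cong)
    have pos: "\<forall>k\<in>J. 0 < \<alpha>' k" "0 < \<alpha> 1" using \<alpha> K by (auto simp: \<alpha>'_def J_def)
    have R: "sum \<alpha>' J + \<alpha> 1 = R" and \<alpha>'1: "\<alpha>' 1 = \<alpha> i"
      using J on_J True by (simp_all add: R_def \<alpha>'_def)
    have C: "(\<Prod>k\<in>J. Gamma (\<alpha>' k)) * Gamma (\<alpha> 1) / Gamma R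
        = (\<Prod>k\<in>{1..K} - {i}. Gamma (\<alpha> k)) / Gamma R"
      using J on_J by (simp add: mult.commute)
    have "(\<integral>\<^sup>+x. g (dirichlet_complete K x i) * ennreal (dirichlet_kernel {1..<K} \<alpha> (\<alpha> K) 1 x)
              \<partial>PiM {1..<K} (\<lambda>_. lborel))
        = (\<integral>\<^sup>+x. g (1 - sum x (insert 1 J)) * ennreal (dirichlet_kernel (insert 1 J) \<alpha> (\<alpha> K) 1 x)
              \<partial>PiM (insert 1 J) (\<lambda>_. lborel))"
      using True K unfolding J(3)[symmetric] by (simp add: dirichlet_complete_def)
    also have "\<dots> = (\<integral>\<^sup>+x. g (x 1) * ennreal (dirichlet_kernel (insert 1 J) \<alpha>' (\<alpha> 1) 1 x)
              \<partial>PiM (insert 1 J) (\<lambda>_. lborel))"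
      unfolding \<alpha>'_def by (rule nn_integral_dirichlet_kernel_swap[OF J(1,2) g])
    also have "\<dots> = ennreal ((\<Prod>k\<in>J. Gamma (\<alpha>' k)) * Gamma (\<alpha> 1) / Gamma (sum \<alpha>' J + \<alpha> 1)) *
         (\<integral>\<^sup>+t. g t * ennreal (if 0 < t \<and> t < 1 then t powr (\<alpha>' 1 - 1) * (1 - t) powr (sum \<alpha>' J + \<alpha> 1 - 1) else 0) \<partial>lborel)"
      by (rule nn_integral_dirichlet_kernel_insert[OF J(1,2) g C_nonneg[OF pos]
            nn_integral_dirichlet_kernel[OF J(1) pos]])
    finally show ?thesis unfolding R \<alpha>'1 C .
  next
    case False
    define J where "J = {1..<K} - {i}"
    have J: "finite J" "i \<notin> J" "{1..<K} = insert i J" "{1..K} - {i} = insert K J" "K \<notin> J"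
      using i False by (auto simp: J_def)
    have pos: "\<forall>k\<in>J. 0 < \<alpha> k" "0 < \<alpha> K" using \<alpha> K by (auto simp: J_def)
    have R: "sum \<alpha> J + \<alpha> K = R" using J by (simp add: R_def)
    have C: "(\<Prod>k\<in>J. Gamma (\<alpha> k)) * Gamma (\<alpha> K) / Gamma R
        = (\<Prod>k\<in>{1..K} - {i}. Gamma (\<alpha> k)) / Gamma R"
      using J by (simp add: mult.commute)
    have "dirichlet_complete K x i = x i" for x
      using i False by (simp add: dirichlet_complete_def)
    then have "(\<integral>\<^sup>+x. g (dirichlet_complete K x i) * ennreal (dirichlet_kernel {1..<K} \<alpha> (\<alpha> K) 1 x)
              \<partial>PiM {1..<K} (\<lambda>_. lborel))
        = (\<integral>\<^sup>+x. g (x i) * ennreal (dirichlet_kernel (insert i J) \<alpha> (\<alpha> K) 1 x)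
              \<partial>PiM (insert i J) (\<lambda>_. lborel))"
      unfolding J(3)[symmetric] by simp
    also have "\<dots> = ennreal ((\<Prod>k\<in>J. Gamma (\<alpha> k)) * Gamma (\<alpha> K) / Gamma (sum \<alpha> J + \<alpha> K)) *
         (\<integral>\<^sup>+t. g t * ennreal (if 0 < t \<and> t < 1 then t powr (\<alpha> i - 1) * (1 - t) powr (sum \<alpha> J + \<alpha> K - 1) else 0) \<partial>lborel)"
      by (rule nn_integral_dirichlet_kernel_insert[OF J(1,2) g C_nonneg[OF pos]
            nn_integral_dirichlet_kernel[OF J(1) pos]])
    finally show ?thesis unfolding R C .
  qed
qed

lemma dirichlet_density_eq_kernel:
  "dirichlet_density K \<alpha> x =
     Gamma (\<Sum>k\<in>{1..K}. \<alpha> k) / (\<Prod>k\<in>{1..K}. Gamma (\<alpha> k)) * dirichlet_kernel {1..<K} \<alpha> (\<alpha> K) 1 x"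
  by (simp add: dirichlet_density_def dirichlet_kernel_def)

lemma measurable_dirichlet_complete [measurable]:
  "dirichlet_complete K \<in> PiM {1..<K} (\<lambda>_. lborel) \<rightarrow>\<^sub>M PiM {1..K} (\<lambda>_. lborel)"
  unfolding dirichlet_complete_def
proof (intro measurable_restrict)
  fix k assume k: "k \<in> {1..K}"
  show "(\<lambda>x. if k = K then 1 - sum x {1..<K} else x k) \<in> PiM {1..<K} (\<lambda>_. lborel) \<rightarrow>\<^sub>M lborel"
    unfolding measurable_lborel2 using k by (cases "k = K") auto
qed

lemma emeasure_dirichlet:
  assumes "A \<in> sets (PiM {1..K} (\<lambda>_. lborel))"
  shows "emeasure (dirichlet K \<alpha>) A =
    (\<integral>\<^sup>+x. ennreal (dirichlet_density K \<alpha> x) * indicator A (dirichlet_complete K x) \<partial>PiM {1..<K} (\<lambda>_. lborel))"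
proof -
  let ?N = "PiM {1..<K} (\<lambda>_. lborel::real measure)"
  have density_measurable: "(\<lambda>x. ennreal (dirichlet_density K \<alpha> x)) \<in> borel_measurable ?N"
    unfolding dirichlet_density_def by measurable
  have "dirichlet_complete K \<in> density ?N (\<lambda>x. ennreal (dirichlet_density K \<alpha> x)) \<rightarrow>\<^sub>M PiM {1..K} (\<lambda>_. lborel)"
    using measurable_dirichlet_complete by simp
  then have "emeasure (dirichlet K \<alpha>) A
      = emeasure (density ?N (\<lambda>x. ennreal (dirichlet_density K \<alpha> x))) (dirichlet_complete K -` A \<inter> space ?N)"
    unfolding dirichlet_def using assms by (subst emeasure_distr) simp_all
  also have "\<dots> = (\<integral>\<^sup>+x. ennreal (dirichlet_density K \<alpha> x) * indicator (dirichlet_complete K -` A \<inter> space ?N) x \<partial>?N)"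
    by (rule emeasure_density[OF density_measurable measurable_sets[OF measurable_dirichlet_complete assms]])
  also have "\<dots> = (\<integral>\<^sup>+x. ennreal (dirichlet_density K \<alpha> x) * indicator A (dirichlet_complete K x) \<partial>?N)"
    by (intro nn_integral_cong) (simp add: indicator_def)
  finally show ?thesis .
qed

lemma dirichlet_complete_in_simplex:
  assumes "1 \<le> K" "\<forall>k\<in>{1..<K}. 0 < x k" "sum x {1..<K} < 1"
  shows "\<forall>k\<in>{1..K}. 0 \<le> dirichlet_complete K x k" "sum (dirichlet_complete K x) {1..K} = 1"
proof -
  show "\<forall>k\<in>{1..K}. 0 \<le> dirichlet_complete K x k"
    using assms by (auto simp: dirichlet_complete_def less_imp_le)
  have "{1..K} = insert K {1..<K}" using assms(1) by auto
  moreover have "sum (dirichlet_complete K x) {1..<K} = sum x {1..<K}"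
    by (intro sum.cong) (auto simp: dirichlet_complete_def)
  ultimately show "sum (dirichlet_complete K x) {1..K} = 1"
    by (simp add: dirichlet_complete_def)
qed

text \<open>The Dirichlet distribution is concentrated on the simplex, so points outside it may be
  added to the event at no cost.\<close>

lemma measure_dirichlet_coordinate_le:
  fixes \<alpha> :: "nat \<Rightarrow> real"
  assumes K: "2 \<le> K" and \<alpha>: "\<forall>k\<in>{1..K}. 0 < \<alpha> k" and i: "i \<in> {1..K}"
    and c: "0 \<le> c" "c \<le> 1"
  defines "R \<equiv> sum \<alpha> ({1..K} - {i})"
  shows "measure (dirichlet K \<alpha>) {x \<in> space (PiM {1..K} (\<lambda>_. lborel)).
           x i \<le> c \<or> \<not> (\<forall>k\<in>{1..K}. 0 \<le> x k) \<or> sum x {1..K} \<noteq> 1}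
    = (LBINT t=0..c. t powr (\<alpha> i - 1) * (1 - t) powr (R - 1))
        / (LBINT t=0..1. t powr (\<alpha> i - 1) * (1 - t) powr (R - 1))"
proof -
  let ?N = "PiM {1..<K} (\<lambda>_. lborel::real measure)"
  let ?A = "{x \<in> space (PiM {1..K} (\<lambda>_. lborel)). x i \<le> c \<or> \<not> (\<forall>k\<in>{1..K}. 0 \<le> x k) \<or> sum x {1..K} \<noteq> 1}"
  let ?w = "dirichlet_kernel {1..<K} \<alpha> (\<alpha> K) 1"
  let ?B = "LBINT t=0..c. t powr (\<alpha> i - 1) * (1 - t) powr (R - 1)"
  define Cd where "Cd = Gamma (\<Sum>k\<in>{1..K}. \<alpha> k) / (\<Prod>k\<in>{1..K}. Gamma (\<alpha> k))"
  define Ci where "Ci = (\<Prod>k\<in>{1..K} - {i}. Gamma (\<alpha> k)) / Gamma R"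
  have \<alpha>i: "0 < \<alpha> i" using \<alpha> i by auto
  have "(if i = 1 then K else 1) \<in> {1..K} - {i}" using K i by auto
  then have R: "0 < R" unfolding R_def using \<alpha> by (intro sum_pos) auto
  have sum_split: "(\<Sum>k\<in>{1..K}. \<alpha> k) = \<alpha> i + R"
    unfolding R_def using sum.remove[of "{1..K}" i \<alpha>] i by simp
  have prod_split: "(\<Prod>k\<in>{1..K}. Gamma (\<alpha> k)) = Gamma (\<alpha> i) * (\<Prod>k\<in>{1..K} - {i}. Gamma (\<alpha> k))"
    using prod.remove[of "{1..K}" i "\<lambda>k. Gamma (\<alpha> k)"] i by simp
  have P: "0 < (\<Prod>k\<in>{1..K} - {i}. Gamma (\<alpha> k))" using \<alpha> by (intro prod_pos) (auto intro: Gamma_real_pos)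
  have G: "0 < Gamma (\<alpha> i)" "0 < Gamma R" "0 < Gamma (\<alpha> i + R)" using \<alpha>i R by (auto intro: Gamma_real_pos)
  have Cd_Ci: "Cd * Ci = 1 / Beta (\<alpha> i) R"
  proof -
    have "z / (x * p) * (p / y) = 1 / (x * y / z)" if "0 < p" "0 < x" "0 < y" "0 < z" for p x y z :: real
      using that by (simp add: field_simps)
    from this[OF P G] show ?thesis unfolding Cd_def Ci_def Beta_def sum_split prod_split .
  qed
  have "0 \<le> Cd" "0 \<le> Ci"
    unfolding Cd_def Ci_def sum_split prod_split using P G by simp_all
  have "0 \<le> ?B"
    using c by (simp add: interval_integral_Ioo set_lebesgue_integral_def indicator_def)
  have density: "dirichlet_density K \<alpha> x = Cd * ?w x" for x
    unfolding Cd_def by (rule dirichlet_density_eq_kernel)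
  have indicator_eq: "ennreal (dirichlet_density K \<alpha> x) * indicator ?A (dirichlet_complete K x)
      = ennreal Cd * (indicator {..c} (dirichlet_complete K x i) * ennreal (?w x))" for x
  proof (cases "?w x = 0")
    case False
    then have "dirichlet_complete K x \<in> space (PiM {1..K} (\<lambda>_. lborel))"
      "\<forall>k\<in>{1..K}. 0 \<le> dirichlet_complete K x k" "sum (dirichlet_complete K x) {1..K} = 1"
      using dirichlet_complete_in_simplex[of K x] dirichlet_kernel_nonzeroD[OF False] K
      by (auto simp: dirichlet_complete_def space_PiM)
    then show ?thesis using \<open>0 \<le> Cd\<close>
      by (simp add: density ennreal_mult dirichlet_kernel_nonneg indicator_def mult_ac)
  qed (simp add: density)
  have "?A \<in> sets (PiM {1..K} (\<lambda>_. lborel))"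
    using i by measurable
  then have "emeasure (dirichlet K \<alpha>) ?A = (\<integral>\<^sup>+x. ennreal Cd *
      (indicator {..c} (dirichlet_complete K x i) * ennreal (?w x)) \<partial>?N)"
    by (simp only: emeasure_dirichlet indicator_eq)
  also have "\<dots> = ennreal Cd * (\<integral>\<^sup>+x. indicator {..c} (dirichlet_complete K x i) * ennreal (?w x) \<partial>?N)"
  proof (intro nn_integral_cmult)
    have "(\<lambda>x. dirichlet_complete K x i) \<in> borel_measurable ?N"
      using measurable_comp[OF measurable_dirichlet_complete measurable_component_singleton[OF i]]
      by (simp add: comp_def)
    moreover have "?w \<in> borel_measurable ?N" by (rule borel_measurable_dirichlet_kernel) simp
    ultimately show "(\<lambda>x. indicator {..c} (dirichlet_complete K x i) * ennreal (?w x)) \<in> borel_measurable ?N"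
      by measurable
  qed
  also have "(\<integral>\<^sup>+x. indicator {..c} (dirichlet_complete K x i) * ennreal (?w x) \<partial>?N)
      = ennreal Ci * (\<integral>\<^sup>+t. indicator {..c} t *
          ennreal (if 0 < t \<and> t < 1 then t powr (\<alpha> i - 1) * (1 - t) powr (R - 1) else 0) \<partial>lborel)"
    unfolding Ci_def R_def by (rule nn_integral_dirichlet_kernel_coordinate[OF K \<alpha> i]) simp
  also have "(\<integral>\<^sup>+t. indicator {..c} t *
          ennreal (if 0 < t \<and> t < 1 then t powr (\<alpha> i - 1) * (1 - t) powr (R - 1) else 0) \<partial>lborel)
      = ennreal ?B"
    by (rule nn_integral_beta_le_eq_interval_integral[OF \<alpha>i R c])
  also have "ennreal Cd * (ennreal Ci * ennreal ?B) = ennreal (?B / Beta (\<alpha> i) R)"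
    using \<open>0 \<le> Cd\<close> \<open>0 \<le> Ci\<close> \<open>0 \<le> ?B\<close> Cd_Ci
    by (simp add: ennreal_mult[symmetric] mult.assoc[symmetric])
  finally show ?thesis
    using \<open>0 \<le> ?B\<close> G by (simp add: measure_def interval_integral_Beta[OF \<alpha>i R] Beta_def)
qed

lemma convex_combination_coordinate_le:
  fixes \<beta> :: "nat \<Rightarrow> 'b::real_normed_vector" and x :: "nat \<Rightarrow> real"
  assumes I: "finite I" "i \<in> I" and x: "\<forall>k\<in>I. 0 \<le> x k" "sum x I = 1"
    and M: "\<forall>k\<in>I. norm (\<beta> i - \<beta> k) \<le> M" "0 < M"
    and far: "(\<Sum>k\<in>I. x k *\<^sub>R \<beta> k) \<notin> ball (\<beta> i) \<epsilon>"
  shows "x i \<le> 1 - \<epsilon> / M"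
proof -
  have "\<beta> i - (\<Sum>k\<in>I. x k *\<^sub>R \<beta> k) = (\<Sum>k\<in>I. x k *\<^sub>R (\<beta> i - \<beta> k))"
    using x by (simp add: scaleR_diff_right sum_subtractf scaleR_sum_left[symmetric])
  then have "\<epsilon> \<le> norm (\<Sum>k\<in>I. x k *\<^sub>R (\<beta> i - \<beta> k))"
    using far by (simp add: dist_norm)
  also have "\<dots> \<le> (\<Sum>k\<in>I. norm (x k *\<^sub>R (\<beta> i - \<beta> k)))"
    by (rule norm_sum)
  also have "\<dots> = (\<Sum>k\<in>I - {i}. x k * norm (\<beta> i - \<beta> k))"
    using x I by (simp add: sum.remove)
  also have "\<dots> \<le> (\<Sum>k\<in>I - {i}. x k * M)"
    using x M by (intro sum_mono mult_left_mono) auto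
  also have "\<dots> = (1 - x i) * M"
    using x I by (simp add: sum_distrib_right[symmetric] sum_diff1)
  finally show ?thesis using M by (simp add: field_simps)
qed

lemma (in prob_space) prob_indep_vars_all_in:
  assumes indep: "indep_vars (\<lambda>_. N) X I" and I: "finite I"
    and distr: "\<forall>m\<in>I. distr M N (X m) = D" and A: "A \<in> sets N"
  shows "prob {\<omega> \<in> space M. \<forall>m\<in>I. X m \<omega> \<in> A} = measure D A ^ card I"
proof (cases "I = {}")
  case False
  have rv: "\<forall>m\<in>I. random_variable N (X m)"
    and sets: "indep_sets (\<lambda>m. {X m -` B \<inter> space M | B. B \<in> sets N}) I"
    using indep unfolding indep_vars_def2 by auto
  have "{\<omega> \<in> space M. \<forall>m\<in>I. X m \<omega> \<in> A} = (\<Inter>m\<in>I. X m -` A \<inter> space M)"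
    using False by auto
  also have "prob \<dots> = (\<Prod>m\<in>I. prob (X m -` A \<inter> space M))"
    using A I False by (intro indep_setsD[OF sets]) auto
  also have "\<dots> = (\<Prod>m\<in>I. measure D A)"
    using rv distr A by (intro prod.cong) (auto simp: measure_distr[symmetric])
  finally show ?thesis by simp
qed (simp add: prob_space)

lemma (in prob_space) events_all_in:
  assumes "\<forall>m\<in>I. random_variable N (X m)" "finite I" "A \<in> sets N"
  shows "{\<omega> \<in> space M. \<forall>m\<in>I. X m \<omega> \<in> A} \<in> events"
proof -
  have [measurable]: "X m \<in> M \<rightarrow>\<^sub>M N" if "m \<in> I" for m
    using assms that by blast
  show ?thesis using assms by measurable
qed

theorem lemma1:
  fixes P :: "'a measure"
    and K Mn :: nat
    and \<alpha> :: "nat \<Rightarrow> real"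
    and \<beta> :: "nat \<Rightarrow> real ^ 'v"
    and \<theta> :: "nat \<Rightarrow> 'a \<Rightarrow> (nat \<Rightarrow> real)"
    and i :: nat and \<epsilon> :: real
  assumes K2: "2 \<le> K"
    and alpha_pos: "\<forall>k\<in>{1..K}. 0 < \<alpha> k"
    and topics: "\<forall>k\<in>{1..K}. (\<forall>j. 0 \<le> \<beta> k $ j) \<and> (\<Sum>j\<in>UNIV. \<beta> k $ j) = 1"
    and P: "prob_space P"
    and indep: "prob_space.indep_vars P (\<lambda>_. PiM {1..K} (\<lambda>_. lborel)) \<theta> {1..Mn}"
    and distr: "\<forall>m\<in>{1..Mn}. distr P (PiM {1..K} (\<lambda>_. lborel)) (\<theta> m) = dirichlet K \<alpha>"
    and i: "i \<in> {1..K}"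
    and eps: "0 < \<epsilon>" "\<epsilon> < Max {norm (\<beta> i - \<beta> k) | k. k \<in> {1..K} \<and> k \<noteq> i}"
  shows "measure P {\<omega> \<in> space P. \<forall>m\<in>{1..Mn}.
            (\<Sum>k\<in>{1..K}. \<theta> m \<omega> k *\<^sub>R \<beta> k) \<notin> ball (\<beta> i) \<epsilon>}
     \<le> ((LBINT t=0..1 - \<epsilon> / Max {norm (\<beta> i - \<beta> k) | k. k \<in> {1..K} \<and> k \<noteq> i}.
            t powr (\<alpha> i - 1) * (1 - t) powr ((\<Sum>j\<in>{1..K}-{i}. \<alpha> j) - 1))
        / (LBINT t=0..1. t powr (\<alpha> i - 1) * (1 - t) powr ((\<Sum>j\<in>{1..K}-{i}. \<alpha> j) - 1))) ^ Mn"
proof -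
  interpret prob_space P by (rule P)
  let ?L = "PiM {1..K} (\<lambda>_. lborel::real measure)"
  define a where "a = Max {norm (\<beta> i - \<beta> k) | k. k \<in> {1..K} \<and> k \<noteq> i}"
  define A where "A = {x \<in> space ?L. x i \<le> 1 - \<epsilon> / a \<or> \<not> (\<forall>k\<in>{1..K}. 0 \<le> x k) \<or> sum x {1..K} \<noteq> 1}"
  have a: "\<epsilon> < a" using eps by (simp add: a_def)
  have a_ge: "\<forall>k\<in>{1..K}. norm (\<beta> i - \<beta> k) \<le> a"
  proof
    fix k assume "k \<in> {1..K}"
    then show "norm (\<beta> i - \<beta> k) \<le> a"
      using a eps by (cases "k = i") (auto simp: a_def intro!: Max_ge)
  qed
  have A: "A \<in> sets ?L" unfolding A_def using i by measurable
  have rv: "\<forall>m\<in>{1..Mn}. random_variable ?L (\<theta> m)"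
    using indep unfolding indep_vars_def2 by auto
  have "\<theta> m \<omega> \<in> A"
    if \<omega>: "\<omega> \<in> space P" and m: "m \<in> {1..Mn}"
      and far: "(\<Sum>k\<in>{1..K}. \<theta> m \<omega> k *\<^sub>R \<beta> k) \<notin> ball (\<beta> i) \<epsilon>" for \<omega> m
  proof -
    have "\<theta> m \<omega> i \<le> 1 - \<epsilon> / a"
      if "\<forall>k\<in>{1..K}. 0 \<le> \<theta> m \<omega> k" "sum (\<theta> m \<omega>) {1..K} = 1"
      using convex_combination_coordinate_le[OF _ i that a_ge _ far] a eps by simp
    moreover have "\<theta> m \<omega> \<in> space ?L" using rv m \<omega> by (auto intro: measurable_space)
    ultimately show ?thesis unfolding A_def by auto
  qed
  then have "measure P {\<omega> \<in> space P. \<forall>m\<in>{1..Mn}. (\<Sum>k\<in>{1..K}. \<theta> m \<omega> k *\<^sub>R \<beta> k) \<notin> ball (\<beta> i) \<epsilon>}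
      \<le> prob {\<omega> \<in> space P. \<forall>m\<in>{1..Mn}. \<theta> m \<omega> \<in> A}"
    by (intro finite_measure_mono events_all_in[OF rv _ A]) auto
  also have "\<dots> = measure (dirichlet K \<alpha>) A ^ Mn"
    using prob_indep_vars_all_in[OF indep _ distr A] by simp
  also have "measure (dirichlet K \<alpha>) A = (LBINT t=0..1 - \<epsilon> / a.
            t powr (\<alpha> i - 1) * (1 - t) powr ((\<Sum>j\<in>{1..K}-{i}. \<alpha> j) - 1))
        / (LBINT t=0..1. t powr (\<alpha> i - 1) * (1 - t) powr ((\<Sum>j\<in>{1..K}-{i}. \<alpha> j) - 1))"
    unfolding A_def using a eps
    by (intro measure_dirichlet_coordinate_le[OF K2 alpha_pos i]) (auto simp: field_simps)
  finally show ?thesis unfolding a_def .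
qed

end
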